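(* Let $\Omega$ be a finite search space, let $f$ be an information resource, and let $\mathcal{A}$ be a search algorithm which, run with $f$, produces a random finite sequence $\tilde{P}=(P_1,\dots,P_{|\tilde{P}|})$ of probability distributions on $\Omega$ together with a search history $H$, with joint law $\nu(\cdot\mid f)$. Let $\alpha$ be a rule assigning to each sequence length $n$ a probability distribution $(\alpha_1,\dots,\alpha_n)$ on $\{1,\dots,n\}$. For a target set $t\subseteq\Omega$ define the general probability of success $$q_\alpha(t,f)=\mathbb{E}_{\tilde{P},H}\Big[\sum_{i=1}^{|\tilde{P}|}\alpha_i P_i(w\in t)\,\Big|\, f\Big].$$ Then $q_\alpha$ is decomposable: defining the vector $\mathbf{P}_{\alpha,f}\in\mathbb{R}^{|\Omega|}$ by $\mathbf{P}_{\alpha,f}(x)=\int \sum_{i=1}^{|\tilde{P}|}\alpha_i P_i(x)\,\mathrm{d}\nu(\tilde{P},h\mid f)$ for $x\in\Omega$, $\mathbf{P}_{\alpha,f}$ is a probability distribution on $\Omega$ that does not depend on $t$, and for every $t\subseteq\Omega$, $$q_\alpha(t,f)=\mathbf{t}^\top\mathbf{P}_{\alpha,f},$$ where $\mathbf{t}\in\{0,1\}^{|\Omega|}$ is the indicator vector of $t$.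
   Context: A probability-of-success metric $\phi$ assigns to each target set $t\subseteq\Omega$ and information resource $f$ a success probability. It is called decomposable if for each $f$ there exists a probability vector $\mathbf{P}_{\phi,f}\in\mathbb{R}^{|\Omega|}$ (nonnegative entries summing to $1$), not a function of $t$, such that $\phi(t,f)=\mathbf{t}^\top\mathbf{P}_{\phi,f}$ for all $t$, where $\mathbf{t}$ is the $0/1$ indicator vector of $t$. *)

theory Defs
  imports "HOL-Probability.Probability"
begin

definition prob_vector :: "('w::finite \<Rightarrow> real) \<Rightarrow> bool" where
  "prob_vector p \<longleftrightarrow> (\<forall>x. 0 \<le> p x) \<and> (\<Sum>x\<in>UNIV. p x) = 1"

definition prob_of :: "('w::finite \<Rightarrow> real) \<Rightarrow> 'w set \<Rightarrow> real" where
  "prob_of p t = (\<Sum>x\<in>t. p x)"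

definition decomposable :: "('w::finite set \<Rightarrow> 'f \<Rightarrow> real) \<Rightarrow> bool" where
  "decomposable \<phi> \<longleftrightarrow>
     (\<forall>f. \<exists>P. prob_vector P \<and> (\<forall>t. \<phi> t f = (\<Sum>x\<in>UNIV. (if x \<in> t then 1 else 0) * P x)))"

definition weight_rule :: "(nat \<Rightarrow> nat \<Rightarrow> real) \<Rightarrow> bool" where
  "weight_rule \<alpha> \<longleftrightarrow> (\<forall>n\<ge>1. (\<forall>i\<in>{1..n}. 0 \<le> \<alpha> n i) \<and> (\<Sum>i=1..n. \<alpha> n i) = 1)"

text \<open>Weighted mixture sum_{i=1}^{|P~|} alpha_i P_i of a sequence of distributions
  (list index i-1 holds P_i).\<close>
definition mix :: "(nat \<Rightarrow> nat \<Rightarrow> real) \<Rightarrow> ('w \<Rightarrow> real) list \<Rightarrow> 'w \<Rightarrow> real" where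
  "mix \<alpha> ps x = (\<Sum>i=1..length ps. \<alpha> (length ps) i * (ps ! (i - 1)) x)"

text \<open>General probability of success q_alpha(t,f) = E[sum alpha_i P_i(w in t) | f],
  where nu f is the joint law of (P~, H) given f.\<close>
definition q_gen :: "(nat \<Rightarrow> nat \<Rightarrow> real) \<Rightarrow> ('f \<Rightarrow> (('w::finite \<Rightarrow> real) list \<times> 'h) measure)
    \<Rightarrow> 'w set \<Rightarrow> 'f \<Rightarrow> real" where
  "q_gen \<alpha> \<nu> t f = (\<integral>(ps, h). (\<Sum>i=1..length ps. \<alpha> (length ps) i * prob_of (ps ! (i - 1)) t) \<partial>\<nu> f)"

end

theory Submission
  imports Defs
begin

text \<open>Each run of the algorithm yields the mixture \<open>\<Sum>\<^sub>i \<alpha>\<^sub>i P\<^sub>i\<close>, a probability vector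
  on \<open>\<Omega>\<close> whose mass on \<open>t\<close> is the weighted success probability of that run. Averaging
  over runs preserves being a probability vector, and since \<open>\<Omega>\<close> is finite and all
  entries lie in \<open>[0, 1]\<close>, the expectation commutes with summation over \<open>t\<close>.\<close>

lemma prob_of_eq_indicator_sum:
  fixes p :: "'w::finite \<Rightarrow> real"
  shows "prob_of p t = (\<Sum>x\<in>UNIV. (if x \<in> t then 1 else 0) * p x)"
  unfolding prob_of_def by (simp add: if_distrib[of "\<lambda>c. c * _"] sum.If_cases)

lemma prob_vector_le_1:
  assumes "prob_vector p"
  shows "p x \<le> 1"
proof -
  have "p x \<le> (\<Sum>y\<in>UNIV. p y)"
    by (rule member_le_sum) (use assms in \<open>auto simp: prob_vector_def\<close>)
  with assms show ?thesis
    by (simp add: prob_vector_def)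
qed

lemma prob_vector_mix:
  fixes ps :: "('w::finite \<Rightarrow> real) list"
  assumes "weight_rule \<alpha>" and "ps \<noteq> []" and "\<forall>p\<in>set ps. prob_vector p"
  shows "prob_vector (mix \<alpha> ps)"
proof -
  let ?n = "length ps"
  have "?n \<ge> 1"
    using \<open>ps \<noteq> []\<close> by (cases ps) auto
  with \<open>weight_rule \<alpha>\<close> have weights_nonneg: "\<And>i. i \<in> {1..?n} \<Longrightarrow> 0 \<le> \<alpha> ?n i"
    and weights_sum: "(\<Sum>i=1..?n. \<alpha> ?n i) = 1"
    unfolding weight_rule_def by auto
  have components: "prob_vector (ps ! (i - 1))" if "i \<in> {1..?n}" for i
    using that assms(3) nth_mem[of "i - 1" ps] by auto
  have nonneg: "0 \<le> mix \<alpha> ps x" for x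
    unfolding mix_def
    by (rule sum_nonneg) (use weights_nonneg components in \<open>auto simp: prob_vector_def\<close>)
  have "(\<Sum>x\<in>UNIV. mix \<alpha> ps x) = (\<Sum>i=1..?n. \<alpha> ?n i * (\<Sum>x\<in>UNIV. (ps ! (i - 1)) x))"
    unfolding mix_def by (simp add: sum_distrib_left sum.swap[of _ UNIV])
  also have "\<dots> = (\<Sum>i=1..?n. \<alpha> ?n i)"
    by (rule sum.cong) (use components in \<open>auto simp: prob_vector_def\<close>)
  finally show ?thesis
    using weights_sum nonneg unfolding prob_vector_def by simp
qed

lemma prob_of_mix:
  fixes ps :: "('w::finite \<Rightarrow> real) list"
  shows "prob_of (mix \<alpha> ps) t = (\<Sum>i=1..length ps. \<alpha> (length ps) i * prob_of (ps ! (i - 1)) t)"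
  unfolding mix_def prob_of_def by (simp add: sum_distrib_left sum.swap[of _ t])

context prob_space
begin

lemma integrable_prob_vector_entry:
  fixes X :: "'a \<Rightarrow> 'w::finite \<Rightarrow> real"
  assumes "\<forall>z\<in>space M. prob_vector (X z)" and "(\<lambda>z. X z x) \<in> borel_measurable M"
  shows "integrable M (\<lambda>z. X z x)"
proof (rule integrable_const_bound[where B = 1])
  show "AE z in M. norm (X z x) \<le> 1"
  proof (rule AE_I2)
    fix z
    assume "z \<in> space M"
    with assms(1) have "prob_vector (X z)" ..
    then show "norm (X z x) \<le> 1"
      using prob_vector_le_1 by (simp add: prob_vector_def)
  qed
qed (fact assms(2))

lemma prob_vector_expectation:
  fixes X :: "'a \<Rightarrow> 'w::finite \<Rightarrow> real"
  assumes pv: "\<forall>z\<in>space M. prob_vector (X z)" and meas: "\<And>x. (\<lambda>z. X z x) \<in> borel_measurable M"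
  shows "prob_vector (\<lambda>x. \<integral>z. X z x \<partial>M)"
proof -
  have "(\<Sum>x\<in>UNIV. \<integral>z. X z x \<partial>M) = (\<integral>z. (\<Sum>x\<in>UNIV. X z x) \<partial>M)"
    using integrable_prob_vector_entry[OF pv meas] by (simp add: integral_sum)
  also have "\<dots> = (\<integral>z. 1 \<partial>M)"
    by (rule Bochner_Integration.integral_cong[OF refl]) (use pv in \<open>auto simp: prob_vector_def\<close>)
  finally have "(\<Sum>x\<in>UNIV. \<integral>z. X z x \<partial>M) = 1"
    by (simp add: prob_space)
  moreover have "0 \<le> (\<integral>z. X z x \<partial>M)" for x
    by (rule integral_nonneg_AE) (use pv in \<open>auto simp: prob_vector_def\<close>)
  ultimately show ?thesis
    unfolding prob_vector_def by blast
qed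

lemma prob_of_expectation:
  fixes X :: "'a \<Rightarrow> 'w::finite \<Rightarrow> real"
  assumes "\<forall>z\<in>space M. prob_vector (X z)" and "\<And>x. (\<lambda>z. X z x) \<in> borel_measurable M"
  shows "prob_of (\<lambda>x. \<integral>z. X z x \<partial>M) t = (\<integral>z. prob_of (X z) t \<partial>M)"
  unfolding prob_of_def
  using integrable_prob_vector_entry[OF assms] by (simp add: integral_sum)

end

theorem lemma2:
  fixes \<alpha> :: "nat \<Rightarrow> nat \<Rightarrow> real"
    and \<nu> :: "'f \<Rightarrow> (('w::finite \<Rightarrow> real) list \<times> 'h) measure"
  assumes alpha: "weight_rule \<alpha>"
    and law: "\<And>f. prob_space (\<nu> f)"
    and dists: "\<And>f. \<forall>(ps, h) \<in> space (\<nu> f). ps \<noteq> [] \<and> (\<forall>p \<in> set ps. prob_vector p)"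
    and meas: "\<And>f x. (\<lambda>(ps, h). mix \<alpha> ps x) \<in> borel_measurable (\<nu> f)"
  shows "decomposable (q_gen \<alpha> \<nu>)
     \<and> (\<forall>f. prob_vector (\<lambda>x. \<integral>(ps, h). mix \<alpha> ps x \<partial>\<nu> f)
          \<and> (\<forall>t. q_gen \<alpha> \<nu> t f
                 = (\<Sum>x\<in>UNIV. (if x \<in> t then 1 else 0) * (\<integral>(ps, h). mix \<alpha> ps x \<partial>\<nu> f))))"
proof -
  have per_resource: "prob_vector (\<lambda>x. \<integral>(ps, h). mix \<alpha> ps x \<partial>\<nu> f)
      \<and> (\<forall>t. q_gen \<alpha> \<nu> t f
             = (\<Sum>x\<in>UNIV. (if x \<in> t then 1 else 0) * (\<integral>(ps, h). mix \<alpha> ps x \<partial>\<nu> f)))" for f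
  proof -
    let ?X = "\<lambda>(ps, h). mix \<alpha> ps"
    have pv: "\<forall>z\<in>space (\<nu> f). prob_vector (?X z)"
      using dists[of f] prob_vector_mix[OF alpha] by fastforce
    have X_meas: "(\<lambda>z. ?X z x) \<in> borel_measurable (\<nu> f)" for x
      using meas[where f = f and x = x] by (simp add: case_prod_app)
    have q_eq: "q_gen \<alpha> \<nu> t f = prob_of (\<lambda>x. \<integral>z. ?X z x \<partial>\<nu> f) t" for t
    proof -
      have "q_gen \<alpha> \<nu> t f = (\<integral>z. prob_of (?X z) t \<partial>\<nu> f)"
        unfolding q_gen_def by (rule Bochner_Integration.integral_cong) (auto simp: prob_of_mix)
      also have "\<dots> = prob_of (\<lambda>x. \<integral>z. ?X z x \<partial>\<nu> f) t"
        using prob_space.prob_of_expectation[OF law pv X_meas] by simp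
      finally show ?thesis .
    qed
    show ?thesis
      using q_eq prob_space.prob_vector_expectation[OF law pv X_meas]
      by (simp add: case_prod_app prob_of_eq_indicator_sum)
  qed
  then show ?thesis
    unfolding decomposable_def by blast
qed

end
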